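(* Let $t>0$ and suppose $f$ is continuous at $X(t)$. Then \[\lim_{N\to\infty}\left|f^N(NX_N(t))/N^\alpha-f(X(t))\right|=0\quad\text{a.s.}\]
   Context: Fix integers $n,m\ge1$, vectors $\nu_1,\dots,\nu_m\in\mathbb{Z}^n$ and $c=(c_1,\dots,c_m)$ with all $c_j>0$; $|\cdot|$ is a fixed norm. For each $N\ge1$ and $j$, $a_j^N(x)=c_jb_j^N(x)$ with $b_j^N:\mathbb{R}^n\to\mathbb{R}$ nonnegative on $\mathbb{Z}_+^n$. Standing assumptions: (i) for each $j$ and $x\in\mathbb{R}_+^n$ the limit $a_j(x)=\lim_Na_j^N(Nx)/N$ exists, and for each compact $K\subset\mathbb{R}_+^n$ there is $B_K>0$ with $|a_j^N(Nx)/N-a_j(x)|\le B_K/N$ for $x\in K$, $N\ge1$, all $j$; (ii) each $a_j$ is continuously differentiable on $\mathbb{R}^n$; (iii) $x_0\in\mathbb{R}_+^n$ is fixed, $N$ ranges over positive integers with $Nx_0\in\mathbb{Z}_+^n$, and on a probability space with independent unit-rate Poisson processes $Y_1,\dots,Y_m$, $X^N$ solves $X^N(t)=Nx_0+\sum_jY_j\big(\int_0^ta_j^N(X^N(s))ds\big)\nu_j$; (iv) with $X_N(t)=X^N(t)/N$, there is $\Gamma$ with $|X_N(t)|\le\Gamma$ a.s. for all $t\ge0$, $N$; (v) $f^N,f:\mathbb{R}^n\to\mathbb{R}$ and $\alpha>0$ satisfy: for each compact $K\subset\mathbb{R}_+^n$ there is $L_K$ with $|f^N(Nx)/N^\alpha-f(x)|\le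 L_K/\sqrt N$ for $x\in K$, $N\ge1$. $X$ is the solution of $X(t)=x_0+\sum_j\nu_j\int_0^ta_j(X(s))ds$, $t\ge0$. *)

theory Defs
  imports "HOL-Probability.Probability"
begin

definition Rplus :: "(real ^ 'n) set" where
  "Rplus = {x. \<forall>i. 0 \<le> x $ i}"

definition Zplus :: "(real ^ 'n) set" where
  "Zplus = {x. \<forall>i. x $ i \<in> \<nat>}"

definition Zvec :: "(real ^ 'n) set" where
  "Zvec = {x. \<forall>i. x $ i \<in> \<int>}"

definition indep_unit_poisson :: "'a measure \<Rightarrow> nat \<Rightarrow> (nat \<Rightarrow> 'a \<Rightarrow> real \<Rightarrow> real) \<Rightarrow> bool" where
  "indep_unit_poisson M m Y \<longleftrightarrow>
     prob_space M \<and>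
     (\<forall>j<m. \<forall>\<omega>\<in>space M.
        Y j \<omega> 0 = 0 \<and> (\<forall>t\<ge>0. Y j \<omega> t \<in> \<nat>) \<and> mono_on {0..} (Y j \<omega>) \<and>
        (\<forall>t\<ge>0. continuous (at_right t) (Y j \<omega>))) \<and>
     (\<forall>j<m. \<forall>t\<ge>0. (\<lambda>\<omega>. Y j \<omega> t) \<in> borel_measurable M) \<and>
     (\<forall>j<m. \<forall>s t. 0 \<le> s \<longrightarrow> s \<le> t \<longrightarrow> (\<forall>k::nat.
        measure M {\<omega>\<in>space M. Y j \<omega> t - Y j \<omega> s = real k}
          = exp (-(t - s)) * (t - s) ^ k / fact k)) \<and>
     (\<forall>(ts :: nat \<Rightarrow> real) K. (\<forall>i. 0 \<le> ts i) \<longrightarrow> mono ts \<longrightarrow>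
        prob_space.indep_vars M (\<lambda>_. borel)
          (\<lambda>(j, i) \<omega>. Y j \<omega> (ts (Suc i)) - Y j \<omega> (ts i)) ({..<m} \<times> {..<K}))"

end

theory Submission
  imports Defs
begin

text \<open>A Chernoff bound and the Borel--Cantelli lemma show that each unit
  Poisson process satisfies Y_j(n)/n \<longrightarrow> 1 almost surely, and monotonicity upgrades this to
  Y_j(N u)/N \<longrightarrow> u uniformly on compact time intervals. Subtracting the integral equation for X
  from the random time-change equation for X_N = X^N/N, the error at time s is bounded by the
  Poisson fluctuation, the O(1/N) error of the rates and a Lipschitz term in the error before s;
  Gronwall's inequality then gives X_N(t) \<longrightarrow> X(t) along the admissible N. Finally
  f^N(N x)/N^\<alpha> is within O(1/sqrt N) of f(x) uniformly on a compact set containing all X_N(t),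
  and continuity of f at X(t) concludes.\<close>

section \<open>Poisson concentration\<close>

lemma measure_nat_valued_le_weighted_sum:
  fixes Z :: "'a \<Rightarrow> real" and S :: "real set" and w p :: "nat \<Rightarrow> real"
  assumes "prob_space M"
    and Z_nat: "\<forall>\<omega>\<in>space M. Z \<omega> \<in> \<nat>"
    and Z_meas: "Z \<in> borel_measurable M"
    and Z_pmf: "\<And>k. measure M {\<omega>\<in>space M. Z \<omega> = real k} = p k"
    and w_nonneg: "\<And>k. 0 \<le> w k"
    and w_ge_1: "\<And>k. real k \<in> S \<Longrightarrow> 1 \<le> w k"
    and sums: "(\<lambda>k. p k * w k) sums s"
  shows "measure M {\<omega>\<in>space M. Z \<omega> \<in> S} \<le> s"
proof -
  interpret prob_space M by fact
  define E where "E k = {\<omega>\<in>space M. Z \<omega> = real k \<and> real k \<in> S}" for k :: nat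
  have E_sets: "E k \<in> sets M" for k
    using Z_meas by (cases "real k \<in> S") (auto simp: E_def)
  have "disjoint_family E"
    by (auto simp: disjoint_family_on_def E_def)
  moreover have "(\<Union>k. E k) = {\<omega>\<in>space M. Z \<omega> \<in> S}"
  proof safe
    fix \<omega> assume "\<omega> \<in> space M" "Z \<omega> \<in> S"
    moreover obtain k where "Z \<omega> = real k"
      using Z_nat \<open>\<omega> \<in> space M\<close> by (metis Nats_cases)
    ultimately show "\<omega> \<in> (\<Union>k. E k)"
      by (auto simp: E_def)
  qed (auto simp: E_def)
  ultimately have E_sums: "(\<lambda>k. measure M (E k)) sums measure M {\<omega>\<in>space M. Z \<omega> \<in> S}"
    using finite_measure_UNION[of E] E_sets by auto
  have E_le: "measure M (E k) \<le> p k * w k" for k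
  proof -
    have p_nonneg: "0 \<le> p k"
      using Z_pmf[of k] measure_nonneg by metis
    show ?thesis
    proof (cases "real k \<in> S")
      case True
      then have "measure M (E k) = p k"
        using Z_pmf by (simp add: E_def)
      then show ?thesis
        using w_ge_1[OF True] p_nonneg by (simp add: mult_le_cancel_left1)
    qed (use p_nonneg w_nonneg in \<open>simp add: E_def\<close>)
  qed
  show ?thesis
    using sums_le[OF E_le E_sums sums] .
qed

lemma poisson_exponential_moment_sums:
  "(\<lambda>k. exp (-\<mu>) * \<mu> ^ k / fact k * exp (\<theta> * (real k - A))) sums
     exp (\<mu> * (exp \<theta> - 1) - \<theta> * A)"
proof -
  have "(\<lambda>k. (\<mu> * exp \<theta>) ^ k / fact k) sums exp (\<mu> * exp \<theta>)"
    using exp_converges[of "\<mu> * exp \<theta>"] by (simp add: divide_inverse mult.commute)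
  then have "(\<lambda>k. (exp (-\<mu>) * exp (-\<theta> * A)) * ((\<mu> * exp \<theta>) ^ k / fact k)) sums
      ((exp (-\<mu>) * exp (-\<theta> * A)) * exp (\<mu> * exp \<theta>))"
    by (rule sums_mult)
  moreover have "(exp (-\<mu>) * exp (-\<theta> * A)) * ((\<mu> * exp \<theta>) ^ k / fact k) =
      exp (-\<mu>) * \<mu> ^ k / fact k * exp (\<theta> * (real k - A))" for k
    by (simp add: power_mult_distrib exp_of_nat_mult[symmetric] exp_diff right_diff_distrib
        mult.commute exp_minus field_simps)
  moreover have "(exp (-\<mu>) * exp (-\<theta> * A)) * exp (\<mu> * exp \<theta>) = exp (\<mu> * (exp \<theta> - 1) - \<theta> * A)"
    by (simp add: right_diff_distrib exp_diff exp_minus exp_add field_simps)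
  ultimately show ?thesis
    by (simp only:)
qed

text \<open>Chernoff bound: weight the Poisson probabilities by exp (\<theta> (k - A)) with
  \<theta> = ln (1 + \<epsilon>) for the upper tail and \<theta> = ln (1 - \<epsilon>) for the lower tail.\<close>
lemma poisson_deviation_bound:
  fixes Z :: "'a \<Rightarrow> real" and \<mu> \<epsilon> :: real
  assumes "prob_space M"
    and Z_nat: "\<forall>\<omega>\<in>space M. Z \<omega> \<in> \<nat>"
    and Z_meas: "Z \<in> borel_measurable M"
    and Z_pmf: "\<And>k. measure M {\<omega>\<in>space M. Z \<omega> = real k} = exp (-\<mu>) * \<mu> ^ k / fact k"
    and \<epsilon>: "0 < \<epsilon>" "\<epsilon> < 1"
  shows "measure M {\<omega>\<in>space M. \<epsilon> * \<mu> \<le> \<bar>Z \<omega> - \<mu>\<bar>}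
     \<le> exp (\<mu> * (\<epsilon> - (1 + \<epsilon>) * ln (1 + \<epsilon>))) + exp (\<mu> * (- \<epsilon> - (1 - \<epsilon>) * ln (1 - \<epsilon>)))"
proof -
  interpret prob_space M by fact
  have tail: "measure M {\<omega>\<in>space M. Z \<omega> \<in> S} \<le> exp (\<mu> * (exp \<theta> - 1) - \<theta> * A)"
    if "\<And>k. real k \<in> S \<Longrightarrow> 0 \<le> \<theta> * (real k - A)" for S \<theta> A
    using measure_nat_valued_le_weighted_sum[OF \<open>prob_space M\<close> Z_nat Z_meas Z_pmf _ _
        poisson_exponential_moment_sums] that by simp
  have "measure M {\<omega>\<in>space M. Z \<omega> \<in> {(1 + \<epsilon>) * \<mu>..}}
      \<le> exp (\<mu> * (exp (ln (1 + \<epsilon>)) - 1) - ln (1 + \<epsilon>) * ((1 + \<epsilon>) * \<mu>))"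
    using \<epsilon> by (intro tail mult_nonneg_nonneg) auto
  also have "\<dots> = exp (\<mu> * (\<epsilon> - (1 + \<epsilon>) * ln (1 + \<epsilon>)))"
    using \<epsilon> by (simp add: algebra_simps)
  finally have upper: "measure M {\<omega>\<in>space M. Z \<omega> \<in> {(1 + \<epsilon>) * \<mu>..}}
      \<le> exp (\<mu> * (\<epsilon> - (1 + \<epsilon>) * ln (1 + \<epsilon>)))" .
  have "measure M {\<omega>\<in>space M. Z \<omega> \<in> {..(1 - \<epsilon>) * \<mu>}}
      \<le> exp (\<mu> * (exp (ln (1 - \<epsilon>)) - 1) - ln (1 - \<epsilon>) * ((1 - \<epsilon>) * \<mu>))"
    using \<epsilon> by (intro tail mult_nonpos_nonpos) auto
  also have "\<dots> = exp (\<mu> * (- \<epsilon> - (1 - \<epsilon>) * ln (1 - \<epsilon>)))"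
    using \<epsilon> by (simp add: algebra_simps)
  finally have lower: "measure M {\<omega>\<in>space M. Z \<omega> \<in> {..(1 - \<epsilon>) * \<mu>}}
      \<le> exp (\<mu> * (- \<epsilon> - (1 - \<epsilon>) * ln (1 - \<epsilon>)))" .
  have "{\<omega>\<in>space M. \<epsilon> * \<mu> \<le> \<bar>Z \<omega> - \<mu>\<bar>} \<subseteq>
      {\<omega>\<in>space M. Z \<omega> \<in> {(1 + \<epsilon>) * \<mu>..}} \<union> {\<omega>\<in>space M. Z \<omega> \<in> {..(1 - \<epsilon>) * \<mu>}}"
    by (auto simp: algebra_simps abs_le_iff)
  then have "measure M {\<omega>\<in>space M. \<epsilon> * \<mu> \<le> \<bar>Z \<omega> - \<mu>\<bar>} \<le>
      measure M ({\<omega>\<in>space M. Z \<omega> \<in> {(1 + \<epsilon>) * \<mu>..}} \<union> {\<omega>\<in>space M. Z \<omega> \<in> {..(1 - \<epsilon>) * \<mu>}})"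
    by (rule finite_measure_mono) (use Z_meas in measurable)
  also have "\<dots> \<le> measure M {\<omega>\<in>space M. Z \<omega> \<in> {(1 + \<epsilon>) * \<mu>..}}
      + measure M {\<omega>\<in>space M. Z \<omega> \<in> {..(1 - \<epsilon>) * \<mu>}}"
    by (rule measure_Un_le) (use Z_meas in measurable)
  finally show ?thesis
    using upper lower by linarith
qed

lemma chernoff_exponents_neg:
  fixes \<epsilon> :: real
  assumes "0 < \<epsilon>" "\<epsilon> < 1"
  shows "\<epsilon> - (1 + \<epsilon>) * ln (1 + \<epsilon>) < 0" and "- \<epsilon> - (1 - \<epsilon>) * ln (1 - \<epsilon>) < 0"
proof -
  have ln_less: "ln y < y - 1" if "0 < y" "y \<noteq> 1" for y :: real
    using ln_le_minus_one[of y] ln_eq_minus_one[of y] that by linarith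
  have "ln (1 / (1 + \<epsilon>)) < 1 / (1 + \<epsilon>) - 1"
    using assms by (intro ln_less) auto
  then have "\<epsilon> / (1 + \<epsilon>) < ln (1 + \<epsilon>)"
    using assms by (simp add: ln_div field_simps)
  then have "\<epsilon> < (1 + \<epsilon>) * ln (1 + \<epsilon>)"
    using assms by (simp add: field_simps)
  then show "\<epsilon> - (1 + \<epsilon>) * ln (1 + \<epsilon>) < 0"
    by simp
  have "ln (1 / (1 - \<epsilon>)) < 1 / (1 - \<epsilon>) - 1"
    using assms by (intro ln_less) auto
  then have "- ln (1 - \<epsilon>) < \<epsilon> / (1 - \<epsilon>)"
    using assms by (simp add: ln_div field_simps)
  then have "- ((1 - \<epsilon>) * ln (1 - \<epsilon>)) < \<epsilon>"
    using assms by (simp add: field_simps)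
  then show "- \<epsilon> - (1 - \<epsilon>) * ln (1 - \<epsilon>) < 0"
    by simp
qed

lemma poisson_eventually_close:
  fixes Z :: "nat \<Rightarrow> 'a \<Rightarrow> real"
  assumes "prob_space M"
    and Z_nat: "\<And>n. \<forall>\<omega>\<in>space M. Z n \<omega> \<in> \<nat>"
    and Z_meas: "\<And>n. Z n \<in> borel_measurable M"
    and Z_pmf: "\<And>n k. measure M {\<omega>\<in>space M. Z n \<omega> = real k} = exp (- real n) * real n ^ k / fact k"
    and \<epsilon>: "0 < \<epsilon>" "\<epsilon> < 1"
  shows "AE \<omega> in M. eventually (\<lambda>n. \<bar>Z n \<omega> - real n\<bar> < \<epsilon> * real n) sequentially"
proof -
  interpret prob_space M by fact
  define q1 where "q1 = exp (\<epsilon> - (1 + \<epsilon>) * ln (1 + \<epsilon>))"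
  define q2 where "q2 = exp (- \<epsilon> - (1 - \<epsilon>) * ln (1 - \<epsilon>))"
  have q: "q1 < 1" "q2 < 1"
    using chernoff_exponents_neg[OF \<epsilon>] by (auto simp: q1_def q2_def)
  define A where "A n = {\<omega>\<in>space M. \<epsilon> * real n \<le> \<bar>Z n \<omega> - real n\<bar>}" for n
  have A_sets: "A n \<in> sets M" for n
    unfolding A_def using Z_meas[of n] by measurable
  have A_le: "measure M (A n) \<le> q1 ^ n + q2 ^ n" for n
    using poisson_deviation_bound[OF \<open>prob_space M\<close> Z_nat Z_meas Z_pmf \<epsilon>, of n]
    by (simp add: A_def q1_def q2_def exp_of_nat_mult[symmetric] mult.commute)
  have "summable (\<lambda>n. q1 ^ n + q2 ^ n)"
    using q by (intro summable_add summable_geometric) (auto simp: q1_def q2_def)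
  then have A_summable: "summable (\<lambda>n. measure M (A n))"
    by (rule summable_comparison_test'[where N=0]) (simp add: A_le)
  have "AE \<omega> in M. eventually (\<lambda>n. \<omega> \<in> space M - A n) sequentially"
    by (rule borel_cantelli_AE1[OF A_sets _ A_summable]) (simp add: less_top[symmetric])
  then show ?thesis
  proof (rule AE_mp, intro AE_I2 impI)
    fix \<omega> assume "\<omega> \<in> space M" "eventually (\<lambda>n. \<omega> \<in> space M - A n) sequentially"
    then show "eventually (\<lambda>n. \<bar>Z n \<omega> - real n\<bar> < \<epsilon> * real n) sequentially"
      by (rule_tac eventually_mono) (auto simp: A_def not_le)
  qed
qed

lemma poisson_ratio_tendsto_one:
  fixes Z :: "nat \<Rightarrow> 'a \<Rightarrow> real"
  assumes "prob_space M"
    and Z_nat: "\<And>n. \<forall>\<omega>\<in>space M. Z n \<omega> \<in> \<nat>"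
    and Z_meas: "\<And>n. Z n \<in> borel_measurable M"
    and Z_pmf: "\<And>n k. measure M {\<omega>\<in>space M. Z n \<omega> = real k} = exp (- real n) * real n ^ k / fact k"
  shows "AE \<omega> in M. (\<lambda>n. Z n \<omega> / real n) \<longlonglongrightarrow> 1"
proof -
  interpret prob_space M by fact
  have "AE \<omega> in M. \<forall>k::nat.
      eventually (\<lambda>n. \<bar>Z n \<omega> - real n\<bar> < 1 / (real k + 2) * real n) sequentially"
    unfolding AE_all_countable
    by (intro allI poisson_eventually_close[OF \<open>prob_space M\<close> Z_nat Z_meas Z_pmf]) auto
  then show ?thesis
  proof (rule AE_mp, intro AE_I2 impI tendstoI)
    fix \<omega> and e :: real
    assume close: "\<forall>k::nat. eventually (\<lambda>n. \<bar>Z n \<omega> - real n\<bar> < 1 / (real k + 2) * real n) sequentially"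
      and "0 < e"
    obtain k :: nat where k: "1 / (real k + 2) < e"
    proof -
      obtain k :: nat where "1 / e < real k"
        using reals_Archimedean2 by blast
      with \<open>0 < e\<close> have "1 / (real k + 2) < e"
        by (simp add: field_simps)
      then show ?thesis
        using that by blast
    qed
    from close[rule_format, of k] eventually_gt_at_top[of 0]
    show "eventually (\<lambda>n. dist (Z n \<omega> / real n) 1 < e) sequentially"
    proof eventually_elim
      case (elim n)
      then have "\<bar>Z n \<omega> / real n - 1\<bar> = \<bar>(Z n \<omega> - real n) / real n\<bar>"
        by (simp add: diff_divide_distrib)
      also have "\<dots> < 1 / (real k + 2)"
        using elim by (simp add: abs_div pos_divide_less_eq)
      finally show ?case
        using k by (simp add: dist_real_def)
    qed
  qed
qed

section \<open>Deterministic estimates\<close>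

lemma linear_error_of_ratio_tendsto_one:
  fixes y :: "real \<Rightarrow> real"
  assumes lim: "(\<lambda>n. y (real n) / real n) \<longlonglongrightarrow> 1" and "0 < \<delta>"
  obtains C where "0 \<le> C" "\<And>k::nat. \<bar>y (real k) - real k\<bar> \<le> C + \<delta> * real k"
proof -
  obtain K where K: "\<And>n. K \<le> n \<Longrightarrow> dist (y (real n) / real n) 1 < \<delta>"
    using tendstoD[OF lim \<open>0 < \<delta>\<close>] by (auto simp: eventually_sequentially)
  define C where "C = (\<Sum>k\<le>K. \<bar>y (real k) - real k\<bar>)"
  have "0 \<le> C"
    unfolding C_def by (intro sum_nonneg) auto
  moreover have "\<bar>y (real k) - real k\<bar> \<le> C + \<delta> * real k" for k
  proof (cases "k \<le> K")
    case True
    then have "\<bar>y (real k) - real k\<bar> \<le> C"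
      unfolding C_def by (intro member_le_sum) auto
    with \<open>0 < \<delta>\<close> show ?thesis
      by (simp add: add_increasing2)
  next
    case False
    then have "0 < real k"
      by simp
    moreover have "\<bar>(y (real k) - real k) / real k\<bar> < \<delta>"
      using K[of k] False \<open>0 < real k\<close> by (simp add: dist_real_def diff_divide_distrib)
    ultimately have "\<bar>y (real k) - real k\<bar> < \<delta> * real k"
      by (simp add: abs_div pos_divide_less_eq)
    with \<open>0 \<le> C\<close> show ?thesis
      by linarith
  qed
  ultimately show ?thesis
    using that by blast
qed

text \<open>Monotonicity lets the convergence at integer times propagate to a uniform
  law of large numbers: y (N u) is squeezed between y \<lfloor>N u\<rfloor> and y (\<lfloor>N u\<rfloor> + 1).\<close>
lemma uniform_rescaled_convergence:
  fixes y :: "real \<Rightarrow> real"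
  assumes mono: "mono_on {0..} y"
    and lim: "(\<lambda>n. y (real n) / real n) \<longlonglongrightarrow> 1"
    and "0 \<le> T" "0 < \<epsilon>"
  shows "eventually (\<lambda>N. \<forall>u\<in>{0..T}. \<bar>y (real N * u) / real N - u\<bar> \<le> \<epsilon>) sequentially"
proof -
  define \<delta> where "\<delta> = \<epsilon> / (2 * (T + 1))"
  have "0 < \<delta>" and \<delta>T: "\<delta> * T \<le> \<epsilon> / 2"
    using assms by (auto simp: \<delta>_def field_simps)
  obtain C where "0 \<le> C" and C: "\<And>k::nat. \<bar>y (real k) - real k\<bar> \<le> C + \<delta> * real k"
    using linear_error_of_ratio_tendsto_one[OF lim \<open>0 < \<delta>\<close>] by blast
  have "eventually (\<lambda>N. (C + 1 + \<delta>) / real N < \<epsilon> / 2) sequentially"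
    using lim_const_over_n \<open>0 < \<epsilon>\<close> by (intro order_tendstoD) auto
  with eventually_gt_at_top[of 0]
  show ?thesis
  proof eventually_elim
    case (elim N)
    show ?case
    proof
      fix u assume "u \<in> {0..T}"
      then have u: "0 \<le> u" "u \<le> T" and "0 \<le> real N * u"
        by auto
      define k where "k = nat \<lfloor>real N * u\<rfloor>"
      have k: "real k \<le> real N * u" "real N * u \<le> real (Suc k)" "real k \<le> real N * T"
        using \<open>0 \<le> real N * u\<close> u mult_left_mono[OF \<open>u \<le> T\<close>, of "real N"]
        by (auto simp: k_def) linarith+
      have "y (real k) \<le> y (real N * u)" "y (real N * u) \<le> y (real (Suc k))"
        using k \<open>0 \<le> real N * u\<close> by (auto intro!: mono_onD[OF mono])
      moreover have "\<delta> * real k \<le> \<delta> * (real N * T)"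
        using k \<open>0 < \<delta>\<close> by simp
      moreover have "\<delta> * real (Suc k) = \<delta> + \<delta> * real k"
        by (simp add: algebra_simps)
      ultimately have "\<bar>y (real N * u) - real N * u\<bar> \<le> (C + 1 + \<delta>) + \<delta> * (real N * T)"
        using k abs_le_D1[OF C[of "Suc k"]] abs_le_D2[OF C[of k]] \<open>0 < \<delta>\<close>
        unfolding abs_le_iff of_nat_Suc by (intro conjI; linarith)
      then have "\<bar>y (real N * u) - real N * u\<bar> / real N \<le> ((C + 1 + \<delta>) + \<delta> * (real N * T)) / real N"
        by (rule divide_right_mono) simp
      also have "\<dots> = (C + 1 + \<delta>) / real N + \<delta> * T"
        using elim by (simp add: field_simps)
      also have "\<dots> \<le> \<epsilon>"
        using elim \<delta>T by linarith
      finally have "\<bar>y (real N * u) - real N * u\<bar> / real N \<le> \<epsilon>" .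
      moreover have "y (real N * u) / real N - u = (y (real N * u) - real N * u) / real N"
        using elim by (simp add: field_simps)
      ultimately show "\<bar>y (real N * u) / real N - u\<bar> \<le> \<epsilon>"
        by (simp add: abs_div)
    qed
  qed
qed

lemma continuous_derivative_imp_lipschitz_on_cball:
  fixes f :: "'a::{real_normed_vector,heine_borel} \<Rightarrow> 'b::real_normed_vector"
    and D :: "'a \<Rightarrow> 'a \<Rightarrow>\<^sub>L 'b"
  assumes deriv: "\<And>x. (f has_derivative blinfun_apply (D x)) (at x)"
    and cont: "continuous_on UNIV D"
  shows "\<exists>L. L-lipschitz_on (cball c R) f"
proof -
  have "compact (D ` cball c R)"
    by (rule compact_continuous_image) (use cont continuous_on_subset in auto)
  then obtain L where "0 < L" "\<And>x. x \<in> cball c R \<Longrightarrow> norm (D x) \<le> L"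
    by (auto dest!: compact_imp_bounded simp: bounded_pos)
  then have "L-lipschitz_on (cball c R) f"
    by (intro bounded_derivative_imp_lipschitz[where f' = "\<lambda>x. blinfun_apply (D x)"])
      (auto intro: has_derivative_at_withinI deriv simp: norm_blinfun.rep_eq[symmetric])
  then show ?thesis ..
qed

lemma lipschitz_on_finite_family:
  assumes "finite I" "\<And>i. i \<in> I \<Longrightarrow> \<exists>L. L-lipschitz_on U (f i)"
  obtains L where "\<And>i. i \<in> I \<Longrightarrow> L-lipschitz_on U (f i)"
proof -
  have "\<forall>i. \<exists>L. i \<in> I \<longrightarrow> L-lipschitz_on U (f i)"
    using assms(2) by blast
  then obtain L where L: "\<And>i. i \<in> I \<Longrightarrow> (L i)-lipschitz_on U (f i)"
    by (metis choice)
  have "L i \<le> (\<Sum>i\<in>I. L i)" if "i \<in> I" for i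
    using that L lipschitz_on_nonneg \<open>finite I\<close> by (intro member_le_sum) auto
  with L show thesis
    by (intro that[of "\<Sum>i\<in>I. L i"]) (rule lipschitz_on_le)
qed

lemma bounds_on_ball_containing_path:
  fixes X :: "real \<Rightarrow> 'v::euclidean_space" and a :: "nat \<Rightarrow> 'v \<Rightarrow> real"
  assumes X_cont: "continuous_on {0..t} X"
    and a_lip: "\<forall>j<m. \<forall>R. \<exists>L. L-lipschitz_on (cball 0 R) (a j)"
  obtains R A L where "\<Gamma> \<le> R" "0 \<le> A" "\<And>u. u \<in> {0..t} \<Longrightarrow> X u \<in> cball 0 R"
    "\<And>j. j < m \<Longrightarrow> L-lipschitz_on (cball 0 R) (a j)"
    "\<And>j x. j < m \<Longrightarrow> x \<in> cball 0 R \<Longrightarrow> \<bar>a j x\<bar> \<le> A"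
proof -
  obtain R' where "\<And>u. u \<in> {0..t} \<Longrightarrow> norm (X u) \<le> R'"
    using compact_imp_bounded[OF compact_continuous_image[OF X_cont compact_Icc]]
    unfolding bounded_iff by blast
  then have X_ball: "X u \<in> cball 0 (max (max \<Gamma> R') 0)" if "u \<in> {0..t}" for u
    using that by fastforce
  define R where "R = max (max \<Gamma> R') 0"
  obtain L where a_lip_R: "\<And>j. j < m \<Longrightarrow> L-lipschitz_on (cball 0 R) (a j)"
  proof (rule lipschitz_on_finite_family[of "{..<m}"])
    show "\<exists>L. L-lipschitz_on (cball 0 R) (a j)" if "j \<in> {..<m}" for j
      using a_lip that by simp
  qed (use that in auto)
  define A where "A = (\<Sum>j<m. \<bar>a j 0\<bar>) + \<bar>L\<bar> * R"
  have "\<bar>a j x\<bar> \<le> A" if "j < m" "x \<in> cball 0 R" for j x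
  proof -
    have "\<bar>a j x - a j 0\<bar> \<le> L * norm x"
      using lipschitz_on_normD[OF a_lip_R[OF that(1)] that(2), of 0] by (simp add: R_def)
    also have "\<dots> \<le> \<bar>L\<bar> * R"
      using that(2) lipschitz_on_nonneg[OF a_lip_R[OF that(1)]] by (simp add: mult_left_mono)
    finally show ?thesis
      using member_le_sum[of j "{..<m}" "\<lambda>j. \<bar>a j 0\<bar>"] that(1) by (simp add: A_def)
  qed
  moreover have "0 \<le> A"
    by (simp add: A_def R_def sum_nonneg)
  ultimately show thesis
    using that[of R A L] X_ball a_lip_R by (simp add: R_def)
qed

text \<open>Gronwall's inequality for a possibly non-integrable \<phi>, proved through the weighted
  supremum \<psi> = sup (exp (-(2 C + 1) u) \<phi> u); the integral inequality is only required for
  continuous majorants of \<phi>.\<close>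
lemma gronwall_continuous_majorants:
  fixes \<phi> :: "real \<Rightarrow> real"
  assumes "0 \<le> t" "0 \<le> K" "0 \<le> C"
    and \<phi>_nonneg: "\<And>u. u \<in> {0..t} \<Longrightarrow> 0 \<le> \<phi> u"
    and \<phi>_bdd: "bdd_above (\<phi> ` {0..t})"
    and step: "\<And>g s. (\<And>u. u \<in> {0..t} \<Longrightarrow> \<phi> u \<le> g u) \<Longrightarrow> continuous_on {0..t} g \<Longrightarrow>
      s \<in> {0..t} \<Longrightarrow> \<phi> s \<le> K + C * integral {0..s} g"
  shows "\<phi> t \<le> 2 * exp ((2 * C + 1) * t) * K"
proof -
  define \<gamma> where "\<gamma> = 2 * C + 1"
  have "0 < \<gamma>" and C_\<gamma>: "C / \<gamma> \<le> 1 / 2"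
    using \<open>0 \<le> C\<close> by (auto simp: \<gamma>_def field_simps)
  define \<psi> where "\<psi> = (SUP u\<in>{0..t}. exp (- \<gamma> * u) * \<phi> u)"
  have "bdd_above ((\<lambda>u. exp (- \<gamma> * u) * \<phi> u) ` {0..t})"
  proof -
    obtain B where "\<And>u. u \<in> {0..t} \<Longrightarrow> \<phi> u \<le> B"
      using \<phi>_bdd unfolding bdd_above_def by blast
    moreover have "exp (- \<gamma> * u) * \<phi> u \<le> \<phi> u" if "u \<in> {0..t}" for u
      using \<phi>_nonneg[OF that] that \<open>0 < \<gamma>\<close> by (intro mult_left_le_one_le) auto
    ultimately show ?thesis
      by (intro bdd_aboveI2) (rule order_trans)
  qed
  then have \<psi>_ge: "exp (- \<gamma> * u) * \<phi> u \<le> \<psi>" if "u \<in> {0..t}" for u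
    unfolding \<psi>_def using that by (rule cSUP_upper2) simp
  have "0 \<le> \<psi>"
    using \<psi>_ge[of 0] \<phi>_nonneg[of 0] \<open>0 \<le> t\<close> by simp
  have majorant: "\<phi> u \<le> exp (\<gamma> * u) * \<psi>" if "u \<in> {0..t}" for u
    using \<psi>_ge[OF that] by (simp add: exp_minus field_simps)
  have "exp (- \<gamma> * s) * \<phi> s \<le> K + \<psi> / 2" if s: "s \<in> {0..t}" for s
  proof -
    have "((\<lambda>u. exp (\<gamma> * u)) has_integral exp (\<gamma> * s) / \<gamma> - exp (\<gamma> * 0) / \<gamma>) {0..s}"
      using s \<open>0 < \<gamma>\<close>
      by (intro fundamental_theorem_of_calculus)
        (auto intro!: derivative_eq_intros simp: has_real_derivative_iff_has_vector_derivative[symmetric])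
    then have int: "integral {0..s} (\<lambda>u. exp (\<gamma> * u) * \<psi>) = (exp (\<gamma> * s) / \<gamma> - 1 / \<gamma>) * \<psi>"
      by (intro integral_unique has_integral_mult_left) simp
    have "\<phi> s \<le> K + C * integral {0..s} (\<lambda>u. exp (\<gamma> * u) * \<psi>)"
      by (intro step[OF majorant _ s] continuous_intros)
    then have "\<phi> s \<le> K + C * ((exp (\<gamma> * s) / \<gamma> - 1 / \<gamma>) * \<psi>)"
      unfolding int .
    also have "\<dots> \<le> K + C * (exp (\<gamma> * s) / \<gamma> * \<psi>)"
      using \<open>0 \<le> C\<close> \<open>0 \<le> \<psi>\<close> \<open>0 < \<gamma>\<close> by (intro add_left_mono mult_left_mono mult_right_mono) auto
    finally have "exp (- \<gamma> * s) * \<phi> s \<le> exp (- \<gamma> * s) * (K + C * (exp (\<gamma> * s) / \<gamma> * \<psi>))"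
      by (rule mult_left_mono) simp
    also have "\<dots> = exp (- \<gamma> * s) * K + C / \<gamma> * \<psi>"
      by (simp add: exp_minus field_simps)
    also have "\<dots> \<le> K + \<psi> / 2"
    proof -
      have "exp (- \<gamma> * s) * K \<le> K"
        using \<open>0 \<le> K\<close> \<open>0 < \<gamma>\<close> s by (intro mult_left_le_one_le) auto
      moreover have "C / \<gamma> * \<psi> \<le> \<psi> / 2"
        using mult_right_mono[OF C_\<gamma> \<open>0 \<le> \<psi>\<close>] by simp
      ultimately show ?thesis
        by linarith
    qed
    finally show ?thesis .
  qed
  then have "\<psi> \<le> K + \<psi> / 2"
    unfolding \<psi>_def using \<open>0 \<le> t\<close> by (intro cSUP_least) auto
  have "\<phi> t \<le> exp (\<gamma> * t) * \<psi>"
    using majorant[of t] \<open>0 \<le> t\<close> by simp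
  also have "\<dots> \<le> 2 * exp (\<gamma> * t) * K"
    using \<open>\<psi> \<le> K + \<psi> / 2\<close> by simp
  finally show ?thesis
    by (simp only: \<gamma>_def)
qed

lemma integral_in_Icc_of_bounds:
  fixes g :: "real \<Rightarrow> real"
  assumes "g integrable_on {0..s}" "s \<in> {0..t}" and g_bounds: "\<And>u. u \<in> {0..s} \<Longrightarrow> 0 \<le> g u \<and> g u \<le> A"
  shows "integral {0..s} g \<in> {0..A * t}"
proof -
  have "0 \<le> integral {0..s} g"
    using assms by (intro integral_nonneg) auto
  moreover have "integral {0..s} g \<le> integral {0..s} (\<lambda>u. A)"
    using assms by (intro integral_le) auto
  moreover have "s * A \<le> t * A"
    using assms g_bounds[of 0] by (intro mult_right_mono) force+
  ultimately show ?thesis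
    using assms by (simp add: mult.commute)
qed

lemma integral_lipschitz_comparison:
  fixes g G :: "real \<Rightarrow> real" and f :: "'v::real_normed_vector \<Rightarrow> real" and Z X :: "real \<Rightarrow> 'v"
  assumes "0 \<le> s"
    and g_int: "g integrable_on {0..s}" and fX_int: "(\<lambda>u. f (X u)) integrable_on {0..s}"
    and G_int: "G integrable_on {0..s}"
    and f_lip: "L-lipschitz_on U f" and "\<And>u. u \<in> {0..s} \<Longrightarrow> Z u \<in> U \<and> X u \<in> U"
    and g_close: "\<And>u. u \<in> {0..s} \<Longrightarrow> \<bar>g u - f (Z u)\<bar> \<le> \<delta>"
    and G_ge: "\<And>u. u \<in> {0..s} \<Longrightarrow> norm (Z u - X u) \<le> G u"
  shows "\<bar>integral {0..s} g - integral {0..s} (\<lambda>u. f (X u))\<bar> \<le> \<delta> * s + L * integral {0..s} G"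
proof -
  have "norm (integral {0..s} (\<lambda>u. g u - f (X u))) \<le> integral {0..s} (\<lambda>u. \<delta> + L * G u)"
  proof (rule integral_norm_bound_integral)
    show "(\<lambda>u. g u - f (X u)) integrable_on {0..s}" "(\<lambda>u. \<delta> + L * G u) integrable_on {0..s}"
      using g_int fX_int G_int by (auto intro!: integrable_diff integrable_add integrable_on_mult_right)
  next
    fix u assume u: "u \<in> {0..s}"
    have "\<bar>f (Z u) - f (X u)\<bar> \<le> L * norm (Z u - X u)"
      using lipschitz_on_normD[OF f_lip] assms(6)[OF u] by simp
    also have "\<dots> \<le> L * G u"
      using G_ge[OF u] lipschitz_on_nonneg[OF f_lip] by (rule mult_left_mono)
    finally show "norm (g u - f (X u)) \<le> \<delta> + L * G u"
      using g_close[OF u] by simp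
  qed
  also have "\<dots> = integral {0..s} (\<lambda>u. \<delta>) + integral {0..s} (\<lambda>u. L * G u)"
    using G_int by (intro integral_add integrable_on_mult_right) auto
  also have "\<dots> = \<delta> * s + L * integral {0..s} G"
    using \<open>0 \<le> s\<close> by (simp add: mult.commute)
  finally show ?thesis
    using g_int fX_int by (simp add: integral_diff)
qed

context
  fixes Z X :: "real \<Rightarrow> 'v::real_normed_vector" and x0 :: 'v and \<nu> :: "nat \<Rightarrow> 'v" and m :: nat
    and g :: "nat \<Rightarrow> real \<Rightarrow> real" and a :: "nat \<Rightarrow> 'v \<Rightarrow> real" and y :: "nat \<Rightarrow> real \<Rightarrow> real"
    and \<rho> t \<epsilon> \<delta> A R L :: real
  assumes "0 \<le> t" "0 \<le> \<epsilon>" "0 \<le> \<delta>"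
    and Z_eq: "\<And>s. s \<in> {0..t} \<Longrightarrow> Z s = x0 + (\<Sum>j<m. (y j (\<rho> * integral {0..s} (g j)) / \<rho>) *\<^sub>R \<nu> j)"
    and X_eq: "\<And>s. s \<in> {0..t} \<Longrightarrow> X s = x0 + (\<Sum>j<m. integral {0..s} (\<lambda>u. a j (X u)) *\<^sub>R \<nu> j)"
    and X_cont: "continuous_on {0..t} X"
    and g_int: "\<And>j s. j < m \<Longrightarrow> s \<in> {0..t} \<Longrightarrow> g j integrable_on {0..s}"
    and g_nonneg: "\<And>j u. j < m \<Longrightarrow> u \<in> {0..t} \<Longrightarrow> 0 \<le> g j u"
    and g_le: "\<And>j u. j < m \<Longrightarrow> u \<in> {0..t} \<Longrightarrow> g j u \<le> A"
    and g_close: "\<And>j u. j < m \<Longrightarrow> u \<in> {0..t} \<Longrightarrow> \<bar>g j u - a j (Z u)\<bar> \<le> \<delta>"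
    and Z_ball: "\<And>u. u \<in> {0..t} \<Longrightarrow> Z u \<in> cball 0 R"
    and X_ball: "\<And>u. u \<in> {0..t} \<Longrightarrow> X u \<in> cball 0 R"
    and a_lip: "\<And>j. j < m \<Longrightarrow> L-lipschitz_on (cball 0 R) (a j)"
    and y_close: "\<And>j u. j < m \<Longrightarrow> u \<in> {0..A * t} \<Longrightarrow> \<bar>y j (\<rho> * u) / \<rho> - u\<bar> \<le> \<epsilon>"
begin

lemma rescaled_path_error_step:
  assumes G_ge: "\<And>u. u \<in> {0..t} \<Longrightarrow> norm (Z u - X u) \<le> G u"
    and G_cont: "continuous_on {0..t} G" and s: "s \<in> {0..t}"
  shows "norm (Z s - X s) \<le>
    (\<Sum>j<m. norm (\<nu> j)) * (\<epsilon> + \<delta> * t) + (\<Sum>j<m. norm (\<nu> j)) * L * integral {0..s} G"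
proof -
  define V where "V = (\<Sum>j<m. norm (\<nu> j))"
  have G_int: "G integrable_on {0..s}"
    using s by (intro integrable_continuous_interval continuous_on_subset[OF G_cont]) auto
  have aX_int: "(\<lambda>u. a j (X u)) integrable_on {0..s}" if "j < m" for j
  proof (rule integrable_continuous_interval)
    have "continuous_on {0..t} (\<lambda>u. a j (X u))"
      using X_ball
      by (intro continuous_on_compose2[OF lipschitz_on_continuous_on[OF a_lip[OF that]] X_cont]) auto
    then show "continuous_on {0..s} (\<lambda>u. a j (X u))"
      by (rule continuous_on_subset) (use s in auto)
  qed
  have channel: "\<bar>y j (\<rho> * integral {0..s} (g j)) / \<rho> - integral {0..s} (\<lambda>u. a j (X u))\<bar>
      \<le> \<epsilon> + (\<delta> * s + L * integral {0..s} G)" if "j < m" for j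
  proof -
    have "\<bar>integral {0..s} (g j) - integral {0..s} (\<lambda>u. a j (X u))\<bar> \<le> \<delta> * s + L * integral {0..s} G"
      using s Z_ball X_ball g_close[OF that] G_ge
      by (intro integral_lipschitz_comparison[where Z = Z, OF _ g_int[OF that s] aX_int[OF that] G_int
            a_lip[OF that]]) auto
    moreover have "integral {0..s} (g j) \<in> {0..A * t}"
      using s g_nonneg[OF that] g_le[OF that]
      by (intro integral_in_Icc_of_bounds[OF g_int[OF that s]]) auto
    ultimately show ?thesis
      using y_close[OF that] by fastforce
  qed
  have "Z s - X s = (\<Sum>j<m. (y j (\<rho> * integral {0..s} (g j)) / \<rho>
      - integral {0..s} (\<lambda>u. a j (X u))) *\<^sub>R \<nu> j)"
    using Z_eq[OF s] X_eq[OF s] by (simp add: scaleR_diff_left sum_subtractf)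
  then have "norm (Z s - X s) \<le> (\<Sum>j<m. norm ((y j (\<rho> * integral {0..s} (g j)) / \<rho>
      - integral {0..s} (\<lambda>u. a j (X u))) *\<^sub>R \<nu> j))"
    by (simp only: norm_sum)
  also have "\<dots> \<le> (\<Sum>j<m. (\<epsilon> + (\<delta> * s + L * integral {0..s} G)) * norm (\<nu> j))"
    using channel by (intro sum_mono) (auto intro: mult_right_mono)
  also have "\<dots> = (\<epsilon> + (\<delta> * s + L * integral {0..s} G)) * V"
    by (simp add: V_def sum_distrib_left)
  also have "\<dots> = V * (\<epsilon> + \<delta> * s) + V * L * integral {0..s} G"
    by (simp add: algebra_simps)
  also have "\<dots> \<le> V * (\<epsilon> + \<delta> * t) + V * L * integral {0..s} G"
    using s \<open>0 \<le> \<delta>\<close> by (simp add: V_def mult_left_mono sum_nonneg)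
  finally show ?thesis
    by (simp only: V_def)
qed

lemma rescaled_path_error_bound:
  "norm (Z t - X t) \<le>
    2 * exp ((2 * ((\<Sum>j<m. norm (\<nu> j)) * L) + 1) * t) * ((\<Sum>j<m. norm (\<nu> j)) * (\<epsilon> + \<delta> * t))"
proof (rule gronwall_continuous_majorants[where \<phi> = "\<lambda>u. norm (Z u - X u)"])
  show "0 \<le> (\<Sum>j<m. norm (\<nu> j)) * (\<epsilon> + \<delta> * t)"
    using \<open>0 \<le> \<epsilon>\<close> \<open>0 \<le> \<delta>\<close> \<open>0 \<le> t\<close> by (simp add: sum_nonneg)
  show "0 \<le> (\<Sum>j<m. norm (\<nu> j)) * L"
    using lipschitz_on_nonneg[OF a_lip[of 0]] by (cases "m = 0") (simp_all add: sum_nonneg)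
  show "bdd_above ((\<lambda>u. norm (Z u - X u)) ` {0..t})"
  proof (rule bdd_aboveI2)
    fix u assume "u \<in> {0..t}"
    then have "norm (Z u) \<le> R" "norm (X u) \<le> R"
      using Z_ball X_ball by auto
    then show "norm (Z u - X u) \<le> 2 * R"
      using norm_triangle_ineq4[of "Z u" "X u"] by linarith
  qed
qed (use \<open>0 \<le> t\<close> rescaled_path_error_step in auto)

end

section \<open>The fluid limit of the rescaled process\<close>

definition random_time_change_solution ::
    "nat \<Rightarrow> (nat \<Rightarrow> real ^ 'n) \<Rightarrow> (nat \<Rightarrow> real ^ 'n \<Rightarrow> real) \<Rightarrow> (nat \<Rightarrow> real \<Rightarrow> real)
      \<Rightarrow> real ^ 'n \<Rightarrow> (real \<Rightarrow> real ^ 'n) \<Rightarrow> bool" where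
  "random_time_change_solution m \<nu> rate y x0 Xp \<longleftrightarrow>
    (\<forall>s\<ge>0. Xp s \<in> Zplus \<and> (\<forall>j<m. (\<lambda>u. rate j (Xp u)) integrable_on {0..s}) \<and>
      Xp s = x0 + (\<Sum>j<m. y j (integral {0..s} (\<lambda>u. rate j (Xp u))) *\<^sub>R \<nu> j))"

lemma random_time_change_solution_Zplus:
  "random_time_change_solution m \<nu> rate y x0 Xp \<Longrightarrow> 0 \<le> s \<Longrightarrow> Xp s \<in> Zplus"
  unfolding random_time_change_solution_def by blast

lemma random_time_change_rescaled:
  assumes "random_time_change_solution m \<nu> rate y (\<rho> *\<^sub>R x0) Xp" "0 < \<rho>" "0 \<le> s"
  shows "(1 / \<rho>) *\<^sub>R Xp s =
    x0 + (\<Sum>j<m. (y j (\<rho> * integral {0..s} (\<lambda>u. rate j (Xp u) / \<rho>)) / \<rho>) *\<^sub>R \<nu> j)"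
proof -
  have "\<rho> * integral {0..s} (\<lambda>u. rate j (Xp u) / \<rho>) = integral {0..s} (\<lambda>u. rate j (Xp u))" for j
    using \<open>0 < \<rho>\<close> by (simp add: integral_divide)
  then show ?thesis
    using assms by (simp add: random_time_change_solution_def scaleR_sum_right scaleR_add_right)
qed

lemma Zplus_scaled_in_Rplus:
  assumes "v \<in> Zplus" "0 < \<rho>"
  shows "(1 / \<rho>) *\<^sub>R v \<in> Rplus"
proof -
  have "0 \<le> v $ i" for i
    using assms(1) unfolding Zplus_def by (metis Nats_cases mem_Collect_eq of_nat_0_le_iff)
  with assms(2) show ?thesis
    by (simp add: Rplus_def)
qed

lemma compact_Rplus_Int_cball: "compact (Rplus \<inter> cball (0 :: real ^ 'n) r)"
  unfolding Rplus_def by (intro closed_Int_compact closed_positive_orthant compact_cball)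

lemma rescaled_process_error_bound:
  fixes XN :: "real \<Rightarrow> real ^ 'n" and X :: "real \<Rightarrow> real ^ 'n" and N :: nat
  assumes "1 \<le> N" "0 \<le> t" "0 \<le> \<epsilon>" "0 \<le> B"
    and sol: "random_time_change_solution m \<nu> rate y (real N *\<^sub>R x0) XN"
    and rate_nonneg: "\<And>j x. j < m \<Longrightarrow> x \<in> Zplus \<Longrightarrow> 0 \<le> rate j x"
    and rate_approx: "\<And>j x. j < m \<Longrightarrow> x \<in> Rplus \<inter> cball 0 \<Gamma> \<Longrightarrow>
      \<bar>rate j (real N *\<^sub>R x) / real N - a j x\<bar> \<le> B / real N"
    and XN_bdd: "\<And>s. 0 \<le> s \<Longrightarrow> norm ((1 / real N) *\<^sub>R XN s) \<le> \<Gamma>"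
    and "\<Gamma> \<le> R"
    and X_ball: "\<And>u. u \<in> {0..t} \<Longrightarrow> X u \<in> cball 0 R"
    and a_lip: "\<And>j. j < m \<Longrightarrow> L-lipschitz_on (cball 0 R) (a j)"
    and a_bdd: "\<And>j x. j < m \<Longrightarrow> x \<in> cball 0 R \<Longrightarrow> \<bar>a j x\<bar> \<le> A"
    and y_close: "\<And>j u. j < m \<Longrightarrow> u \<in> {0..(A + B) * t} \<Longrightarrow>
      \<bar>y j (real N * u) / real N - u\<bar> \<le> \<epsilon>"
    and X_cont: "continuous_on {0..t} X"
    and X_eq: "\<And>s. s \<in> {0..t} \<Longrightarrow> X s = x0 + (\<Sum>j<m. integral {0..s} (\<lambda>u. a j (X u)) *\<^sub>R \<nu> j)"
  shows "norm ((1 / real N) *\<^sub>R XN t - X t) \<le>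
    2 * exp ((2 * ((\<Sum>j<m. norm (\<nu> j)) * L) + 1) * t) * ((\<Sum>j<m. norm (\<nu> j)) * (\<epsilon> + B / real N * t))"
proof -
  have "0 < real N"
    using \<open>1 \<le> N\<close> by simp
  define Z where "Z u = (1 / real N) *\<^sub>R XN u" for u
  have Z_K: "Z u \<in> Rplus \<inter> cball 0 \<Gamma>" if "0 \<le> u" for u
    using Zplus_scaled_in_Rplus[OF random_time_change_solution_Zplus[OF sol that] \<open>0 < real N\<close>]
      XN_bdd[OF that]
    by (simp add: Z_def)
  have Z_ball: "Z u \<in> cball 0 R" if "u \<in> {0..t}" for u
    using Z_K[of u] that \<open>\<Gamma> \<le> R\<close> by auto
  define g where "g = (\<lambda>j u. rate j (XN u) / real N)"
  have g_close: "\<bar>g j u - a j (Z u)\<bar> \<le> B / real N" if "j < m" "u \<in> {0..t}" for j u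
    using rate_approx[OF that(1) Z_K[of u]] that \<open>0 < real N\<close> by (simp add: g_def Z_def)
  show ?thesis
    unfolding Z_def[symmetric]
  proof (rule rescaled_path_error_bound[where g = g and A = "A + B" and a = a and y = y and R = R])
    show "Z s = x0 + (\<Sum>j<m. (y j (real N * integral {0..s} (g j)) / real N) *\<^sub>R \<nu> j)"
      if "s \<in> {0..t}" for s
      using random_time_change_rescaled[OF sol \<open>0 < real N\<close>, of s] that
      unfolding Z_def g_def by simp
    show "g j integrable_on {0..s}" if "j < m" "s \<in> {0..t}" for j s
      using sol that \<open>0 < real N\<close> by (simp add: random_time_change_solution_def g_def)
    show "0 \<le> g j u" if "j < m" "u \<in> {0..t}" for j u
      using rate_nonneg[OF that(1) random_time_change_solution_Zplus[OF sol]] that \<open>0 < real N\<close>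
      by (simp add: g_def)
    show "g j u \<le> A + B" if "j < m" "u \<in> {0..t}" for j u
    proof -
      have "B / real N \<le> B"
        using \<open>0 \<le> B\<close> \<open>1 \<le> N\<close> by (simp add: divide_le_eq mult_le_cancel_left1)
      then show ?thesis
        using g_close[OF that] a_bdd[OF that(1) Z_ball[OF that(2)]] by linarith
    qed
  qed (use assms g_close Z_ball \<open>0 < real N\<close> in auto)
qed

lemma rescaled_process_tendsto:
  fixes XN :: "nat \<Rightarrow> real \<Rightarrow> real ^ 'n" and X :: "real \<Rightarrow> real ^ 'n"
    and rate :: "nat \<Rightarrow> nat \<Rightarrow> real ^ 'n \<Rightarrow> real" and a :: "nat \<Rightarrow> real ^ 'n \<Rightarrow> real"
  assumes "0 \<le> t"
    and S_pos: "\<And>N. N \<in> S \<Longrightarrow> 1 \<le> N"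
    and sol: "\<And>N. N \<in> S \<Longrightarrow> random_time_change_solution m \<nu> (rate N) y (real N *\<^sub>R x0) (XN N)"
    and XN_bdd: "\<And>N s. N \<in> S \<Longrightarrow> 0 \<le> s \<Longrightarrow> norm ((1 / real N) *\<^sub>R XN N s) \<le> \<Gamma>"
    and rate_nonneg: "\<And>N j x. N \<in> S \<Longrightarrow> j < m \<Longrightarrow> x \<in> Zplus \<Longrightarrow> 0 \<le> rate N j x"
    and rate_approx: "\<And>K. compact K \<Longrightarrow> K \<subseteq> Rplus \<Longrightarrow> \<exists>B>0. \<forall>x\<in>K. \<forall>N\<in>S. \<forall>j<m.
      \<bar>rate N j (real N *\<^sub>R x) / real N - a j x\<bar> \<le> B / real N"
    and a_lip: "\<forall>j<m. \<forall>R. \<exists>L. L-lipschitz_on (cball 0 R) (a j)"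
    and y_mono: "\<And>j. j < m \<Longrightarrow> mono_on {0..} (y j)"
    and y_lim: "\<And>j. j < m \<Longrightarrow> (\<lambda>n. y j (real n) / real n) \<longlonglongrightarrow> 1"
    and X_cont: "continuous_on {0..t} X"
    and X_eq: "\<And>s. s \<in> {0..t} \<Longrightarrow> X s = x0 + (\<Sum>j<m. integral {0..s} (\<lambda>u. a j (X u)) *\<^sub>R \<nu> j)"
  shows "((\<lambda>N. (1 / real N) *\<^sub>R XN N t) \<longlongrightarrow> X t) (inf sequentially (principal S))"
proof -
  obtain R A L where "\<Gamma> \<le> R" "0 \<le> A" and X_ball: "\<And>u. u \<in> {0..t} \<Longrightarrow> X u \<in> cball 0 R"
    and a_lip_R: "\<And>j. j < m \<Longrightarrow> L-lipschitz_on (cball 0 R) (a j)"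
    and a_bdd: "\<And>j x. j < m \<Longrightarrow> x \<in> cball 0 R \<Longrightarrow> \<bar>a j x\<bar> \<le> A"
    using X_cont a_lip by (rule bounds_on_ball_containing_path[where \<Gamma> = \<Gamma>]) (rule that)
  obtain B where "0 < B" and B: "\<And>j x N. j < m \<Longrightarrow> x \<in> Rplus \<inter> cball 0 \<Gamma> \<Longrightarrow> N \<in> S \<Longrightarrow>
      \<bar>rate N j (real N *\<^sub>R x) / real N - a j x\<bar> \<le> B / real N"
    using rate_approx[OF compact_Rplus_Int_cball] by blast
  define C where "C = 2 * exp ((2 * ((\<Sum>j<m. norm (\<nu> j)) * L) + 1) * t) * (\<Sum>j<m. norm (\<nu> j))"
  have "0 \<le> C"
    by (simp add: C_def sum_nonneg)
  show ?thesis
  proof (rule tendstoI)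
    fix \<eta> :: real assume "0 < \<eta>"
    define \<epsilon> where "\<epsilon> = \<eta> / (4 * (C + 1))"
    have "0 < \<epsilon>"
      using \<open>0 < \<eta>\<close> \<open>0 \<le> C\<close> by (simp add: \<epsilon>_def)
    have C_\<epsilon>: "C * (2 * \<epsilon>) < \<eta>"
      using \<open>0 < \<eta>\<close> \<open>0 \<le> C\<close> by (simp add: \<epsilon>_def field_simps add_pos_nonneg)
    have "(\<lambda>N. B / real N * t) \<longlonglongrightarrow> 0"
      using tendsto_mult[OF lim_const_over_n[of B] tendsto_const[of t]] by simp
    then have "eventually (\<lambda>N. B / real N * t < \<epsilon>) sequentially"
      using \<open>0 < \<epsilon>\<close> by (rule order_tendstoD)
    moreover have "eventually (\<lambda>N. \<forall>j\<in>{..<m}. \<forall>u\<in>{0..(A + B) * t}.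
        \<bar>y j (real N * u) / real N - u\<bar> \<le> \<epsilon>) sequentially"
      using y_mono y_lim \<open>0 < \<epsilon>\<close> \<open>0 \<le> t\<close> \<open>0 < B\<close> \<open>0 \<le> A\<close>
      by (intro eventually_ball_finite ballI uniform_rescaled_convergence) auto
    ultimately have "eventually (\<lambda>N. N \<in> S \<longrightarrow> dist ((1 / real N) *\<^sub>R XN N t) (X t) < \<eta>) sequentially"
    proof (eventually_elim, intro impI)
      case (elim N)
      assume "N \<in> S"
      have "norm ((1 / real N) *\<^sub>R XN N t - X t) \<le> 2 * exp ((2 * ((\<Sum>j<m. norm (\<nu> j)) * L) + 1) * t)
          * ((\<Sum>j<m. norm (\<nu> j)) * (\<epsilon> + B / real N * t))"
        using elim \<open>0 < \<epsilon>\<close> \<open>0 < B\<close>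
        by (intro rescaled_process_error_bound[OF S_pos[OF \<open>N \<in> S\<close>] \<open>0 \<le> t\<close> _ _ sol[OF \<open>N \<in> S\<close>]
            rate_nonneg[OF \<open>N \<in> S\<close>] B[OF _ _ \<open>N \<in> S\<close>] XN_bdd[OF \<open>N \<in> S\<close>] \<open>\<Gamma> \<le> R\<close>
            X_ball a_lip_R a_bdd _ X_cont X_eq]) auto
      also have "\<dots> = C * (\<epsilon> + B / real N * t)"
        by (simp add: C_def)
      also have "\<dots> \<le> C * (2 * \<epsilon>)"
        using elim \<open>0 \<le> C\<close> by (intro mult_left_mono) auto
      finally show "dist ((1 / real N) *\<^sub>R XN N t) (X t) < \<eta>"
        using C_\<epsilon> by (simp add: dist_norm)
    qed
    then show "eventually (\<lambda>N. dist ((1 / real N) *\<^sub>R XN N t) (X t) < \<eta>) (inf sequentially (principal S))"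
      by (simp add: eventually_inf_principal)
  qed
qed

lemma scaled_observable_tendsto:
  fixes Z :: "nat \<Rightarrow> 'a::real_normed_vector" and fN :: "nat \<Rightarrow> 'a \<Rightarrow> real"
  assumes Z: "(Z \<longlongrightarrow> z) F" and "F \<le> sequentially"
    and Z_K: "eventually (\<lambda>N. 1 \<le> N \<and> Z N \<in> K) F"
    and f_rate: "\<forall>x\<in>K. \<forall>N\<ge>1. \<bar>fN N (real N *\<^sub>R x) / real N powr \<alpha> - f x\<bar> \<le> L / sqrt (real N)"
    and "isCont f z"
  shows "((\<lambda>N. \<bar>fN N (real N *\<^sub>R Z N) / real N powr \<alpha> - f z\<bar>) \<longlongrightarrow> 0) F"
proof (rule tendsto_sandwich[where f = "\<lambda>_. 0"])
  show "eventually (\<lambda>N. \<bar>fN N (real N *\<^sub>R Z N) / real N powr \<alpha> - f z\<bar>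
      \<le> L / sqrt (real N) + \<bar>f (Z N) - f z\<bar>) F"
    using Z_K by eventually_elim (use f_rate in fastforce)
  have "((\<lambda>N. L / sqrt (real N)) \<longlongrightarrow> 0) sequentially"
    by (intro tendsto_divide_0[OF tendsto_const] filterlim_at_top_imp_at_infinity
        filterlim_compose[OF sqrt_at_top filterlim_real_sequentially])
  then have "((\<lambda>N. L / sqrt (real N)) \<longlongrightarrow> 0) F"
    using \<open>F \<le> sequentially\<close> by (rule tendsto_mono[rotated])
  moreover have "((\<lambda>N. \<bar>f (Z N) - f z\<bar>) \<longlongrightarrow> 0) F"
    using isCont_tendsto_compose[OF \<open>isCont f z\<close> Z] by (intro tendsto_rabs_zero LIM_zero)
  ultimately show "((\<lambda>N. L / sqrt (real N) + \<bar>f (Z N) - f z\<bar>) \<longlongrightarrow> 0) F"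
    using tendsto_add by fastforce
qed auto

lemma indep_unit_poisson_AE_paths:
  assumes "indep_unit_poisson M m Y"
  shows "AE \<omega> in M. \<forall>j<m. mono_on {0..} (Y j \<omega>) \<and> (\<lambda>n. Y j \<omega> (real n) / real n) \<longlonglongrightarrow> 1"
proof -
  have "prob_space M"
    and mono: "\<And>j \<omega>. j < m \<Longrightarrow> \<omega> \<in> space M \<Longrightarrow> mono_on {0..} (Y j \<omega>)"
    and paths: "\<And>j \<omega>. j < m \<Longrightarrow> \<omega> \<in> space M \<Longrightarrow> Y j \<omega> 0 = 0 \<and> (\<forall>t\<ge>0. Y j \<omega> t \<in> \<nat>)"
    and meas: "\<And>j t. j < m \<Longrightarrow> 0 \<le> t \<Longrightarrow> (\<lambda>\<omega>. Y j \<omega> t) \<in> borel_measurable M"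
    and increments: "\<And>j t k. j < m \<Longrightarrow> 0 \<le> t \<Longrightarrow>
      measure M {\<omega>\<in>space M. Y j \<omega> t - Y j \<omega> 0 = real k} = exp (- t) * t ^ k / fact k"
    using assms unfolding indep_unit_poisson_def by (blast, blast, blast, blast, fastforce)
  have "AE \<omega> in M. (\<lambda>n. Y j \<omega> (real n) / real n) \<longlonglongrightarrow> 1" if "j < m" for j
  proof (rule poisson_ratio_tendsto_one[OF \<open>prob_space M\<close>])
    show "\<forall>\<omega>\<in>space M. Y j \<omega> (real n) \<in> \<nat>" "(\<lambda>\<omega>. Y j \<omega> (real n)) \<in> borel_measurable M" for n
      using paths meas that by auto
    show "measure M {\<omega>\<in>space M. Y j \<omega> (real n) = real k} = exp (- real n) * real n ^ k / fact k" for n k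
    proof -
      have "{\<omega>\<in>space M. Y j \<omega> (real n) = real k} = {\<omega>\<in>space M. Y j \<omega> (real n) - Y j \<omega> 0 = real k}"
        using paths[OF that] by auto
      then show ?thesis
        using increments[OF that, of "real n" k] by simp
    qed
  qed
  then have "AE \<omega> in M. \<forall>j<m. (\<lambda>n. Y j \<omega> (real n) / real n) \<longlonglongrightarrow> 1"
    by (subst AE_all_countable) (auto intro: AE_mp)
  with AE_space show ?thesis
    by eventually_elim (use mono in blast)
qed

theorem lemma3p4:
  fixes m :: nat
    and \<nu> :: "nat \<Rightarrow> real ^ 'n"
    and c :: "nat \<Rightarrow> real"
    and b :: "nat \<Rightarrow> nat \<Rightarrow> real ^ 'n \<Rightarrow> real"
    and a :: "nat \<Rightarrow> real ^ 'n \<Rightarrow> real"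
    and x0 :: "real ^ 'n"
    and M :: "'a measure"
    and Y :: "nat \<Rightarrow> 'a \<Rightarrow> real \<Rightarrow> real"
    and XN :: "nat \<Rightarrow> 'a \<Rightarrow> real \<Rightarrow> real ^ 'n"
    and fN :: "nat \<Rightarrow> real ^ 'n \<Rightarrow> real"
    and f :: "real ^ 'n \<Rightarrow> real"
    and \<alpha> :: real
    and X :: "real \<Rightarrow> real ^ 'n"
    and t :: real
  assumes m_pos: "m \<ge> 1"
    and nu_int: "\<forall>j<m. \<nu> j \<in> Zvec"
    and c_pos: "\<forall>j<m. c j > 0"
    and b_nonneg: "\<forall>j<m. \<forall>N\<ge>1. \<forall>x\<in>Zplus. b j N x \<ge> 0"
    \<comment> \<open>(i): a_j(x) = lim a_j^N(Nx)/N with rate 1/N uniformly on compacts of R_+^n\<close>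
    and a_lim: "\<forall>j<m. \<forall>x\<in>Rplus.
       ((\<lambda>N. c j * b j N (real N *\<^sub>R x) / real N) \<longlongrightarrow> a j x) sequentially"
    and a_rate: "\<forall>K. compact K \<and> K \<subseteq> Rplus \<longrightarrow> (\<exists>B>0. \<forall>x\<in>K. \<forall>N\<ge>1. \<forall>j<m.
       \<bar>c j * b j N (real N *\<^sub>R x) / real N - a j x\<bar> \<le> B / real N)"
    \<comment> \<open>(ii): each a_j is continuously differentiable on R^n\<close>
    and a_C1: "\<forall>j<m. \<exists>D :: real ^ 'n \<Rightarrow> ((real ^ 'n) \<Rightarrow>\<^sub>L real).
       (\<forall>x. (a j has_derivative blinfun_apply (D x)) (at x)) \<and> continuous_on UNIV D"
    \<comment> \<open>(iii): Poisson processes and the random time-change equation for X^N\<close>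
    and x0_pos: "x0 \<in> Rplus"
    and Y_poisson: "indep_unit_poisson M m Y"
    and XN_eq: "\<forall>N\<ge>1. real N *\<^sub>R x0 \<in> Zplus \<longrightarrow> (AE \<omega> in M. \<forall>s\<ge>0.
       XN N \<omega> s \<in> Zplus \<and>
       (\<forall>j<m. (\<lambda>u. c j * b j N (XN N \<omega> u)) integrable_on {0..s}) \<and>
       XN N \<omega> s = real N *\<^sub>R x0 +
         (\<Sum>j<m. Y j \<omega> (integral {0..s} (\<lambda>u. c j * b j N (XN N \<omega> u))) *\<^sub>R \<nu> j))"
    \<comment> \<open>(iv): uniform bound on X_N = X^N / N\<close>
    and XN_bdd: "\<exists>\<Gamma>. \<forall>N\<ge>1. real N *\<^sub>R x0 \<in> Zplus \<longrightarrow>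
       (AE \<omega> in M. \<forall>s\<ge>0. norm ((1 / real N) *\<^sub>R XN N \<omega> s) \<le> \<Gamma>)"
    \<comment> \<open>(v)\<close>
    and alpha_pos: "\<alpha> > 0"
    and f_rate: "\<forall>K. compact K \<and> K \<subseteq> Rplus \<longrightarrow> (\<exists>L. \<forall>x\<in>K. \<forall>N\<ge>1.
       \<bar>fN N (real N *\<^sub>R x) / real N powr \<alpha> - f x\<bar> \<le> L / sqrt (real N))"
    \<comment> \<open>X solves the deterministic integral equation\<close>
    and X_cont: "continuous_on {0..} X"
    and X_eq: "\<forall>s\<ge>0. X s = x0 + (\<Sum>j<m. integral {0..s} (\<lambda>u. a j (X u)) *\<^sub>R \<nu> j)"
    and t_pos: "t > 0"
    and f_cont: "isCont f (X t)"
  shows "AE \<omega> in M.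
    ((\<lambda>N. \<bar>fN N (real N *\<^sub>R ((1 / real N) *\<^sub>R XN N \<omega> t)) / real N powr \<alpha> - f (X t)\<bar>)
       \<longlongrightarrow> 0)
    (inf sequentially (principal {N. N \<ge> 1 \<and> real N *\<^sub>R x0 \<in> Zplus}))"
proof -
  obtain \<Gamma> where \<Gamma>: "\<forall>N\<ge>1. real N *\<^sub>R x0 \<in> Zplus \<longrightarrow>
      (AE \<omega> in M. \<forall>s\<ge>0. norm ((1 / real N) *\<^sub>R XN N \<omega> s) \<le> \<Gamma>)"
    using XN_bdd by blast
  obtain Lf where Lf: "\<forall>x\<in>Rplus \<inter> cball 0 \<Gamma>. \<forall>N\<ge>1.
      \<bar>fN N (real N *\<^sub>R x) / real N powr \<alpha> - f x\<bar> \<le> Lf / sqrt (real N)"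
    using f_rate compact_Rplus_Int_cball by blast
  define S where "S = {N. N \<ge> 1 \<and> real N *\<^sub>R x0 \<in> Zplus}"
  have "AE \<omega> in M. \<forall>N\<in>S.
      random_time_change_solution m \<nu> (\<lambda>j x. c j * b j N x) (\<lambda>j. Y j \<omega>) (real N *\<^sub>R x0) (XN N \<omega>) \<and>
      (\<forall>s\<ge>0. norm ((1 / real N) *\<^sub>R XN N \<omega> s) \<le> \<Gamma>)"
    using XN_eq \<Gamma> unfolding random_time_change_solution_def
    by (subst AE_ball_countable) (auto simp: S_def)
  with indep_unit_poisson_AE_paths[OF Y_poisson] show ?thesis
    unfolding S_def[symmetric]
  proof eventually_elim
    case (elim \<omega>)
    have "((\<lambda>N. (1 / real N) *\<^sub>R XN N \<omega> t) \<longlongrightarrow> X t) (inf sequentially (principal S))"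
    proof (rule rescaled_process_tendsto)
      show "\<forall>j<m. \<forall>R. \<exists>L. L-lipschitz_on (cball 0 R) (a j)"
        using a_C1 continuous_derivative_imp_lipschitz_on_cball by blast
      show "\<exists>B>0. \<forall>x\<in>K. \<forall>N\<in>S. \<forall>j<m.
          \<bar>c j * b j N (real N *\<^sub>R x) / real N - a j x\<bar> \<le> B / real N"
        if "compact K" "K \<subseteq> Rplus" for K
        using a_rate that by (fastforce simp: S_def)
    qed (use t_pos c_pos b_nonneg elim X_eq
        in \<open>auto simp: S_def intro: continuous_on_subset[OF X_cont]\<close>)
    moreover have "eventually (\<lambda>N. 1 \<le> N \<and> (1 / real N) *\<^sub>R XN N \<omega> t \<in> Rplus \<inter> cball 0 \<Gamma>)
        (inf sequentially (principal S))"
      unfolding eventually_inf_principal using elim t_pos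
      by (intro always_eventually allI impI conjI IntI Zplus_scaled_in_Rplus
          random_time_change_solution_Zplus) (auto simp: S_def)
    ultimately show ?case
      using Lf f_cont by (intro scaled_observable_tendsto) auto
  qed
qed

end
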